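(* Let $C\subset\mathbb{R}^d$ be a nonempty closed convex set, let $f(x)=\mathbb{E}_\xi[f(x,\xi)]$ where each $f(\cdot,\xi)$ is convex and $G$-Lipschitz, and let $x_*\in\arg\min_{x\in C}f(x)$. Let $\xi_0,\xi_1,\dots$ be i.i.d. samples, $c_k\in(0,1]$ and $\eta_k>0$ for $k\ge0$. Consider the projected SGDM iterates: $x_0\in C$, $z_0=x_0$, $z_{k+1}=\Pi_C(z_k-\eta_k\nabla f(x_k,\xi_k))$ for $k\ge 0$ and $x_k=(1-c_k)x_{k-1}+c_kz_k$ for $k\ge1$. Define, for $k\ge1$, $$A_k=\|z_k-x_*\|^2+\frac{2}{c_{k-1}}\eta_{k-1}\left[f(x_{k-1})-f(x_* )\right].$$ Suppose that $\left(\frac{1}{c_k}-1\right)\eta_k\le\frac{1}{c_{k-1}}\eta_{k-1}$ for all $k\ge2$ and $\left(\frac{1}{c_1}-1\right)\eta_1\le 0$. Then for every $k\ge1$, $$\mathbb{E}_{\xi_k}\left[A_{k+1}\right]\le A_k+\eta_k^2G^2,$$ where $\mathbb{E}_{\xi_k}$ denotes expectation with respect to $\xi_k$ conditional on $\xi_0,\dots,\xi_{k-1}$.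
   Context: $\Pi_C$ is the Euclidean projection onto $C$; $\nabla f(x,\xi)$ is a subgradient of $f(\cdot,\xi)$ at $x$. *)

theory Defs
  imports "HOL-Probability.Probability"
begin

definition is_subgradient :: "('a::real_inner \<Rightarrow> real) \<Rightarrow> 'a \<Rightarrow> 'a \<Rightarrow> bool" where
  "is_subgradient h x v \<longleftrightarrow> (\<forall>y. h y \<ge> h x + inner v (y - x))"

text \<open>Projected SGD with momentum. Given the sample path xi, returns (x_k, z_k).
  Pi_C is the Euclidean projection closest_point C; g x s is the stochastic subgradient.\<close>
fun sgdm :: "'a::euclidean_space set \<Rightarrow> ('a \<Rightarrow> 'b \<Rightarrow> 'a) \<Rightarrow> 'a \<Rightarrow> (nat \<Rightarrow> real) \<Rightarrow> (nat \<Rightarrow> real)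
             \<Rightarrow> (nat \<Rightarrow> 'b) \<Rightarrow> nat \<Rightarrow> 'a \<times> 'a" where
  "sgdm C g x0 \<eta> c \<xi> 0 = (x0, x0)"
| "sgdm C g x0 \<eta> c \<xi> (Suc k) =
     (let xk = fst (sgdm C g x0 \<eta> c \<xi> k); zk = snd (sgdm C g x0 \<eta> c \<xi> k);
          z' = closest_point C (zk - \<eta> k *\<^sub>R g xk (\<xi> k))
      in ((1 - c (Suc k)) *\<^sub>R xk + c (Suc k) *\<^sub>R z', z'))"

definition sgdm_A :: "'a::euclidean_space set \<Rightarrow> ('a \<Rightarrow> 'b \<Rightarrow> 'a) \<Rightarrow> ('a \<Rightarrow> real) \<Rightarrow> 'a \<Rightarrow> 'a
     \<Rightarrow> (nat \<Rightarrow> real) \<Rightarrow> (nat \<Rightarrow> real) \<Rightarrow> (nat \<Rightarrow> 'b) \<Rightarrow> nat \<Rightarrow> real" where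
  "sgdm_A C g F x0 xs \<eta> c \<xi> k =
     (norm (snd (sgdm C g x0 \<eta> c \<xi> k) - xs))\<^sup>2
     + 2 / c (k - 1) * \<eta> (k - 1) * (F (fst (sgdm C g x0 \<eta> c \<xi> (k - 1))) - F xs)"

end

theory Submission
  imports Defs
begin

text \<open>Projection onto \<open>C\<close> is nonexpansive and fixes \<open>x\<^sub>*\<close>, so
  \<open>\<parallel>z\<^sub>k\<^sub>+\<^sub>1 - x\<^sub>*\<parallel>\<^sup>2 \<le> \<parallel>z\<^sub>k - x\<^sub>*\<parallel>\<^sup>2 - 2\<eta>\<^sub>k\<langle>g, z\<^sub>k - x\<^sub>*\<rangle> + \<eta>\<^sub>k\<^sup>2G\<^sup>2\<close>, where \<open>\<parallel>g\<parallel> \<le> G\<close> by Lipschitz continuity.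
  The momentum update gives \<open>z\<^sub>k - x\<^sub>* = (1/c\<^sub>k - 1)(x\<^sub>k - x\<^sub>k\<^sub>-\<^sub>1) + (x\<^sub>k - x\<^sub>*)\<close>, and the
  subgradient inequality at \<open>x\<^sub>k\<close>, applied towards \<open>x\<^sub>k\<^sub>-\<^sub>1\<close> and towards \<open>x\<^sub>*\<close>, bounds the
  cross term by function values. After taking expectations the \<open>f(x\<^sub>k)\<close> terms cancel
  against the second summand of \<open>A\<^sub>k\<^sub>+\<^sub>1\<close>, leaving
  \<open>2(1/c\<^sub>k - 1)\<eta>\<^sub>k [f(x\<^sub>k\<^sub>-\<^sub>1) - f(x\<^sub>*)]\<close>, which the step-size condition bounds by the
  second summand of \<open>A\<^sub>k\<close>.\<close>

lemma subgradient_norm_le_lipschitz: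
  fixes h :: "'a::real_inner \<Rightarrow> real"
  assumes lip: "G-lipschitz_on UNIV h" and sub: "is_subgradient h x v"
  shows "norm v \<le> G"
proof -
  have G: "0 \<le> G" "dist (h (x + v)) (h x) \<le> G * dist (x + v) x"
    using lip by (auto simp: lipschitz_on_def)
  have "h x + inner v v \<le> h (x + v)"
    using sub[unfolded is_subgradient_def, rule_format, of "x + v"] by simp
  then have "(norm v)\<^sup>2 \<le> G * norm v"
    using G by (simp add: dist_norm power2_norm_eq_inner)
  then show ?thesis
    using G by (cases "norm v = 0") (auto simp: power2_eq_square)
qed

lemma subgradient_inner_momentum_ge:
  fixes h :: "'a::real_inner \<Rightarrow> real"
  assumes sub: "is_subgradient h x v" and a: "0 \<le> a" and z: "z - x = a *\<^sub>R (x - x')"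
  shows "a * (h x - h x') + (h x - h y) \<le> inner v (z - y)"
proof -
  have "h x + inner v (x' - x) \<le> h x'" "h x + inner v (y - x) \<le> h y"
    using sub by (auto simp: is_subgradient_def)
  then have "h x - h x' \<le> inner v (x - x')" "h x - h y \<le> inner v (x - y)"
    by (simp_all add: inner_diff_right)
  then have "a * (h x - h x') + (h x - h y) \<le> a * inner v (x - x') + inner v (x - y)"
    using a by (intro add_mono mult_left_mono)
  also have "\<dots> = inner v ((z - x) + (x - y))"
    unfolding z by (simp only: inner_add_right inner_scaleR_right)
  also have "\<dots> = inner v (z - y)"
    by simp
  finally show ?thesis .
qed

lemma convex_comb_diff_eq:
  fixes y z :: "'a::real_vector"
  assumes t: "t \<noteq> 0"
  shows "z - ((1 - t) *\<^sub>R y + t *\<^sub>R z) = (1 / t - 1) *\<^sub>R (((1 - t) *\<^sub>R y + t *\<^sub>R z) - y)"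
proof -
  have "(1 / t - 1) *\<^sub>R (((1 - t) *\<^sub>R y + t *\<^sub>R z) - y) = ((1 / t - 1) * t) *\<^sub>R (z - y)"
    by (simp add: algebra_simps)
  also have "(1 / t - 1) * t = 1 - t"
    using t by (simp add: field_simps)
  finally show ?thesis
    using t by (simp add: algebra_simps)
qed

lemma norm_diff_scaleR_sq:
  fixes u v :: "'a::real_inner"
  shows "(norm (u - t *\<^sub>R v))\<^sup>2 = (norm u)\<^sup>2 - 2 * t * inner v u + t\<^sup>2 * (norm v)\<^sup>2"
  unfolding power2_norm_eq_inner
  by (simp add: inner_diff_left inner_diff_right inner_commute[of u v] power2_eq_square algebra_simps)

lemma norm_closest_point_diff_le:
  fixes C :: "'a::euclidean_space set"
  assumes C: "closed C" "convex C" and y: "y \<in> C"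
  shows "norm (closest_point C w - y) \<le> norm (w - y)"
  using closest_point_lipschitz[of C w y] closest_point_self[OF y] C y
  by (auto simp: dist_norm)

lemma closest_point_step_sq_le:
  fixes C :: "'a::euclidean_space set"
  assumes C: "closed C" "convex C" and y: "y \<in> C"
  shows "(norm (closest_point C (z - t *\<^sub>R v) - y))\<^sup>2
           \<le> (norm (z - y))\<^sup>2 - 2 * t * inner v (z - y) + t\<^sup>2 * (norm v)\<^sup>2"
proof -
  have "norm (closest_point C (z - t *\<^sub>R v) - y) \<le> norm ((z - y) - t *\<^sub>R v)"
    using norm_closest_point_diff_le[OF C y, of "z - t *\<^sub>R v"] by (simp add: algebra_simps)
  then have "(norm (closest_point C (z - t *\<^sub>R v) - y))\<^sup>2 \<le> (norm ((z - y) - t *\<^sub>R v))\<^sup>2"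
    by (simp add: power_mono)
  then show ?thesis
    by (simp only: norm_diff_scaleR_sq)
qed

lemma (in prob_space) integrable_projected_step_sq:
  fixes C :: "'b::euclidean_space set" and v :: "'a \<Rightarrow> 'b"
  assumes C: "closed C" "convex C" and y: "y \<in> C"
    and v: "v \<in> borel_measurable M" "\<And>s. s \<in> space M \<Longrightarrow> norm (v s) \<le> G"
  shows "integrable M (\<lambda>s. (norm (closest_point C (z - t *\<^sub>R v s) - y))\<^sup>2)"
proof (rule integrable_const_bound)
  have "closest_point C \<in> borel_measurable borel"
    using C y by (intro borel_measurable_continuous_onI continuous_on_closest_point) auto
  then show "(\<lambda>s. (norm (closest_point C (z - t *\<^sub>R v s) - y))\<^sup>2) \<in> borel_measurable M"
    using v(1) by measurable
  have "norm (closest_point C (z - t *\<^sub>R v s) - y) \<le> norm (z - y) + \<bar>t\<bar> * G"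
    if "s \<in> space M" for s
  proof -
    have "norm (closest_point C (z - t *\<^sub>R v s) - y) \<le> norm ((z - y) - t *\<^sub>R v s)"
      using norm_closest_point_diff_le[OF C y, of "z - t *\<^sub>R v s"] by (simp add: algebra_simps)
    also have "\<dots> \<le> norm (z - y) + \<bar>t\<bar> * norm (v s)"
      by (rule order_trans[OF norm_triangle_ineq4]) simp
    also have "\<dots> \<le> norm (z - y) + \<bar>t\<bar> * G"
      using v(2)[OF that] by (simp add: mult_left_mono)
    finally show ?thesis .
  qed
  then show "AE s in M. norm ((norm (closest_point C (z - t *\<^sub>R v s) - y))\<^sup>2) \<le> (norm (z - y) + \<bar>t\<bar> * G)\<^sup>2"
    by (intro AE_I2) (simp add: power_mono)
qed

lemma (in prob_space) expectation_projected_subgradient_step_le: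
  fixes C :: "'b::euclidean_space set" and f :: "'b \<Rightarrow> 'a \<Rightarrow> real" and v :: "'a \<Rightarrow> 'b"
  assumes C: "closed C" "convex C" and y: "y \<in> C"
    and fint: "\<And>w. integrable M (f w)"
    and v: "v \<in> borel_measurable M"
    and lip: "\<And>s. s \<in> space M \<Longrightarrow> G-lipschitz_on UNIV (\<lambda>w. f w s)"
    and sub: "\<And>s. s \<in> space M \<Longrightarrow> is_subgradient (\<lambda>w. f w s) x (v s)"
    and t: "0 \<le> t" and a: "0 \<le> a" and z: "z - x = a *\<^sub>R (x - x')"
  shows "(\<integral>s. (norm (closest_point C (z - t *\<^sub>R v s) - y))\<^sup>2 \<partial>M)
           \<le> (norm (z - y))\<^sup>2 - 2 * t * (a * (expectation (f x) - expectation (f x'))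
                 + (expectation (f x) - expectation (f y))) + t\<^sup>2 * G\<^sup>2"
proof -
  define u where "u = (\<lambda>s. (norm (z - y))\<^sup>2 - 2 * t * (a * (f x s - f x' s) + (f x s - f y s)) + t\<^sup>2 * G\<^sup>2)"
  have vG: "norm (v s) \<le> G" if "s \<in> space M" for s
    using subgradient_norm_le_lipschitz[OF lip[OF that] sub[OF that]] .
  have "(norm (closest_point C (z - t *\<^sub>R v s) - y))\<^sup>2 \<le> u s" if s: "s \<in> space M" for s
  proof -
    have "2 * t * (a * (f x s - f x' s) + (f x s - f y s)) \<le> 2 * t * inner (v s) (z - y)"
      using subgradient_inner_momentum_ge[OF sub[OF s] a z] t by (simp add: mult_left_mono)
    moreover have "t\<^sup>2 * (norm (v s))\<^sup>2 \<le> t\<^sup>2 * G\<^sup>2"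
      using vG[OF s] by (simp add: mult_left_mono power_mono)
    ultimately show ?thesis
      using closest_point_step_sq_le[OF C y, of z t "v s"] by (simp add: u_def)
  qed
  then have "(\<integral>s. (norm (closest_point C (z - t *\<^sub>R v s) - y))\<^sup>2 \<partial>M) \<le> integral\<^sup>L M u"
    using integrable_projected_step_sq[OF C y v vG] fint by (intro integral_mono) (simp_all add: u_def)
  also have "integral\<^sup>L M u = (norm (z - y))\<^sup>2 - 2 * t * (a * (expectation (f x) - expectation (f x'))
                 + (expectation (f x) - expectation (f y))) + t\<^sup>2 * G\<^sup>2"
    using fint by (simp add: u_def prob_space)
  finally show ?thesis .
qed

lemma sgdm_cong_prefix:
  assumes "\<And>i. i < j \<Longrightarrow> \<xi>' i = \<xi> i"
  shows "sgdm C g x0 \<eta> c \<xi>' j = sgdm C g x0 \<eta> c \<xi> j"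
  using assms by (induction j) (auto simp: Let_def)

lemma sgdm_in_set:
  assumes C: "closed C" "convex C" "C \<noteq> {}" and x0: "x0 \<in> C"
    and c: "\<And>j. 0 < c j \<and> c j \<le> 1"
  shows "fst (sgdm C g x0 \<eta> c \<xi> j) \<in> C \<and> snd (sgdm C g x0 \<eta> c \<xi> j) \<in> C"
proof (induction j)
  case 0
  then show ?case using x0 by simp
next
  case (Suc j)
  define x where "x = fst (sgdm C g x0 \<eta> c \<xi> j)"
  define z' where "z' = closest_point C (snd (sgdm C g x0 \<eta> c \<xi> j) - \<eta> j *\<^sub>R g x (\<xi> j))"
  have "z' \<in> C"
    using C by (simp add: z'_def closest_point_in_set)
  moreover have "(1 - c (Suc j)) *\<^sub>R x + c (Suc j) *\<^sub>R z' \<in> C"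
    using convexD[OF C(2)] Suc \<open>z' \<in> C\<close> c[of "Suc j"] by (simp add: x_def)
  ultimately show ?case
    by (simp add: Let_def x_def z'_def)
qed

lemma sgdm_snd_diff_fst:
  assumes "c (Suc k) \<noteq> 0"
  shows "snd (sgdm C g x0 \<eta> c \<xi> (Suc k)) - fst (sgdm C g x0 \<eta> c \<xi> (Suc k))
           = (1 / c (Suc k) - 1) *\<^sub>R (fst (sgdm C g x0 \<eta> c \<xi> (Suc k)) - fst (sgdm C g x0 \<eta> c \<xi> k))"
  using convex_comb_diff_eq[OF assms] by (simp add: Let_def)

lemma sgdm_A_Suc_fun_upd:
  "sgdm_A C g F x0 xs \<eta> c (\<xi>(k := s)) (Suc k)
     = (norm (closest_point C (snd (sgdm C g x0 \<eta> c \<xi> k) - \<eta> k *\<^sub>R g (fst (sgdm C g x0 \<eta> c \<xi> k)) s)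
         - xs))\<^sup>2 + 2 / c k * \<eta> k * (F (fst (sgdm C g x0 \<eta> c \<xi> k)) - F xs)"
proof -
  have "sgdm C g x0 \<eta> c (\<xi>(k := s)) k = sgdm C g x0 \<eta> c \<xi> k"
    by (rule sgdm_cong_prefix) simp
  then show ?thesis
    by (simp add: sgdm_A_def Let_def)
qed

lemma momentum_weight_le:
  fixes c \<eta> :: "nat \<Rightarrow> real"
  assumes c0: "0 < c 0" and eta0: "0 < \<eta> 0"
    and step: "\<And>j. 2 \<le> j \<Longrightarrow> (1 / c j - 1) * \<eta> j \<le> \<eta> (j - 1) / c (j - 1)"
    and step1: "(1 / c 1 - 1) * \<eta> 1 \<le> 0"
    and k: "1 \<le> k"
  shows "(1 / c k - 1) * \<eta> k \<le> \<eta> (k - 1) / c (k - 1)"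
proof (cases "k = 1")
  case True
  have "0 < \<eta> 0 / c 0"
    using eta0 c0 by simp
  then show ?thesis
    using step1 True by simp
next
  case False
  then show ?thesis
    using step k by simp
qed

lemma (in prob_space) sgdm_A_Suc_expectation_le:
  fixes C :: "'b::euclidean_space set" and f :: "'b \<Rightarrow> 'a \<Rightarrow> real"
    and x0 :: 'b and \<xi> :: "nat \<Rightarrow> 'a"
  assumes C: "closed C" "convex C" and xs: "xs \<in> C"
    and fint: "\<And>x. integrable M (f x)"
    and gmeas: "\<And>x. g x \<in> borel_measurable M"
    and lip: "\<And>s. s \<in> space M \<Longrightarrow> G-lipschitz_on UNIV (\<lambda>x. f x s)"
    and sub: "\<And>x s. s \<in> space M \<Longrightarrow> is_subgradient (\<lambda>y. f y s) x (g x s)"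
    and c: "0 < c k" "c k \<le> 1" and eta: "0 \<le> \<eta> k" and k: "1 \<le> k"
  defines "F \<equiv> \<lambda>x. expectation (f x)"
    and "X \<equiv> \<lambda>j. fst (sgdm C g x0 \<eta> c \<xi> j)" and "Z \<equiv> \<lambda>j. snd (sgdm C g x0 \<eta> c \<xi> j)"
  shows "(\<integral>s. sgdm_A C g F x0 xs \<eta> c (\<xi>(k := s)) (Suc k) \<partial>M)
           \<le> (norm (Z k - xs))\<^sup>2 + (\<eta> k)\<^sup>2 * G\<^sup>2 + 2 * ((1 / c k - 1) * \<eta> k) * (F (X (k - 1)) - F xs)"
proof -
  define a where "a = 1 / c k - 1"
  have a: "0 \<le> a"
    using c by (simp add: a_def)
  have "Z k - X k = a *\<^sub>R (X k - X (k - 1))"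
    using sgdm_snd_diff_fst[of c "k - 1"] c k by (simp add: a_def X_def Z_def)
  then have proj: "(\<integral>s. (norm (closest_point C (Z k - \<eta> k *\<^sub>R g (X k) s) - xs))\<^sup>2 \<partial>M)
      \<le> (norm (Z k - xs))\<^sup>2 - 2 * \<eta> k * (a * (F (X k) - F (X (k - 1))) + (F (X k) - F xs))
        + (\<eta> k)\<^sup>2 * G\<^sup>2"
    unfolding F_def
    by (intro expectation_projected_subgradient_step_le[OF C xs fint gmeas lip sub eta a])
  have "(\<integral>s. sgdm_A C g F x0 xs \<eta> c (\<xi>(k := s)) (Suc k) \<partial>M)
      = (\<integral>s. (norm (closest_point C (Z k - \<eta> k *\<^sub>R g (X k) s) - xs))\<^sup>2 \<partial>M)
        + 2 / c k * \<eta> k * (F (X k) - F xs)"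
    using integrable_projected_step_sq[OF C xs gmeas, of "X k" G "Z k" "\<eta> k"]
      subgradient_norm_le_lipschitz[OF lip sub]
    by (simp add: sgdm_A_Suc_fun_upd X_def Z_def prob_space)
  also have "\<dots> \<le> (norm (Z k - xs))\<^sup>2 - 2 * \<eta> k * (a * (F (X k) - F (X (k - 1))) + (F (X k) - F xs))
      + (\<eta> k)\<^sup>2 * G\<^sup>2 + 2 / c k * \<eta> k * (F (X k) - F xs)"
    using proj by simp
  also have "\<dots> = (norm (Z k - xs))\<^sup>2 + (\<eta> k)\<^sup>2 * G\<^sup>2 + 2 * (a * \<eta> k) * (F (X (k - 1)) - F xs)"
    using c by (simp add: a_def field_simps)
  finally show ?thesis
    unfolding a_def .
qed

theorem corollary16:
  fixes C :: "'a::euclidean_space set"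
    and M :: "'b measure"
    and f :: "'a \<Rightarrow> 'b \<Rightarrow> real"
    and g :: "'a \<Rightarrow> 'b \<Rightarrow> 'a"
    and G :: real and x0 xs :: 'a
    and \<eta> c :: "nat \<Rightarrow> real"
    and \<xi> :: "nat \<Rightarrow> 'b"
    and k :: nat
  assumes P: "prob_space M"
    and C: "closed C" "convex C" "C \<noteq> {}"
    and fint: "\<And>x. integrable M (f x)"
    and gmeas: "\<And>x. g x \<in> borel_measurable M"
    and fconv: "\<And>s. s \<in> space M \<Longrightarrow> convex_on UNIV (\<lambda>x. f x s)"
    and flip: "\<And>s. s \<in> space M \<Longrightarrow> G-lipschitz_on UNIV (\<lambda>x. f x s)"
    and gsub: "\<And>x s. s \<in> space M \<Longrightarrow> is_subgradient (\<lambda>y. f y s) x (g x s)"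
    and xs: "xs \<in> C" "\<And>x. x \<in> C \<Longrightarrow> (\<integral>s. f xs s \<partial>M) \<le> (\<integral>s. f x s \<partial>M)"
    and x0: "x0 \<in> C"
    and c: "\<And>j. 0 < c j \<and> c j \<le> 1"
    and eta: "\<And>j. 0 < \<eta> j"
    and step: "\<And>j. 2 \<le> j \<Longrightarrow> (1 / c j - 1) * \<eta> j \<le> \<eta> (j - 1) / c (j - 1)"
    and step1: "(1 / c 1 - 1) * \<eta> 1 \<le> 0"
    and samples: "\<And>i. \<xi> i \<in> space M"
    and k: "1 \<le> k"
  shows "(\<integral>s. sgdm_A C g (\<lambda>x. \<integral>t. f x t \<partial>M) x0 xs \<eta> c (\<xi>(k := s)) (Suc k) \<partial>M)
         \<le> sgdm_A C g (\<lambda>x. \<integral>t. f x t \<partial>M) x0 xs \<eta> c \<xi> k + (\<eta> k)\<^sup>2 * G\<^sup>2"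
proof -
  interpret prob_space M by (rule P)
  define F where "F = (\<lambda>x. expectation (f x))"
  define X where "X j = fst (sgdm C g x0 \<eta> c \<xi> j)" for j
  have "X j \<in> C" for j
    unfolding X_def using sgdm_in_set[OF C x0] c by blast
  then have gap: "0 \<le> F (X (k - 1)) - F xs"
    using xs(2) by (simp add: F_def)
  have weight: "(1 / c k - 1) * \<eta> k \<le> \<eta> (k - 1) / c (k - 1)"
    using momentum_weight_le[of c \<eta>] c eta step step1 k by simp
  have "(\<integral>s. sgdm_A C g F x0 xs \<eta> c (\<xi>(k := s)) (Suc k) \<partial>M)
      \<le> (norm (snd (sgdm C g x0 \<eta> c \<xi> k) - xs))\<^sup>2 + (\<eta> k)\<^sup>2 * G\<^sup>2
        + 2 * ((1 / c k - 1) * \<eta> k) * (F (X (k - 1)) - F xs)"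
    unfolding F_def X_def using c[of k] eta[of k] k
    by (intro sgdm_A_Suc_expectation_le[OF C(1,2) xs(1) fint gmeas flip gsub]) auto
  also have "\<dots> \<le> (norm (snd (sgdm C g x0 \<eta> c \<xi> k) - xs))\<^sup>2 + (\<eta> k)\<^sup>2 * G\<^sup>2
        + 2 * (\<eta> (k - 1) / c (k - 1)) * (F (X (k - 1)) - F xs)"
    using mult_right_mono[OF weight gap] by simp
  also have "\<dots> = sgdm_A C g F x0 xs \<eta> c \<xi> k + (\<eta> k)\<^sup>2 * G\<^sup>2"
    by (simp add: sgdm_A_def X_def)
  finally show ?thesis
    unfolding F_def .
qed

end
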